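(* Let $V$ be an upper probability on $(\Omega,\mathcal{F})$ and $\theta:\Omega\to\Omega$ a measurable map preserving $V$. Consider the statements: (i) $\theta$ is ergodic with respect to $V$; (ii) every bounded measurable $\xi:\Omega\to\mathbb{R}$ with $\xi(\theta\omega)=\xi(\omega)$ for all $\omega$ is constant quasi-surely; (iii) every measurable $\xi:\Omega\to\mathbb{R}$ with $\xi\circ\theta=\xi$ quasi-surely is constant quasi-surely. Then (iii) implies (ii) and (ii) implies (i). Moreover, if $V$ is continuous from below, then (ii) and (i) are equivalent; if $V$ is continuous, all three statements are equivalent.
   Context: An upper probability is $V(A)=\sup_{P\in\mathcal{P}}P(A)$ for a nonempty set $\mathcal{P}$ of finitely additive probabilities on $\mathcal{F}$. $\theta$ preserves $V$ if $V(\theta^{-1}A)=V(A)$ for all $A\in\mathcal{F}$. $V$ is continuous from below if $V(A_n)\to V(A)$ for $A_n\uparrow A$, and continuous if also $V(A_n)\to V(A)$ for $A_n\downarrow A$. A statement holds quasi-surely if it holds outside a set $A$ with $V(A)=0$; "$\xi$ is constant quasi-surely" means there is $c\in\mathbb{R}$ with $V(\{\xi\ne c\})=0$. $\theta$ is ergodic with respect to $V$ if for every $B\in\mathcal{F}$ with $\theta^{-1}B=B$: $V(B)\in\{0,1\}$, and $V(B)=0$ or $V(B^c)=0$. *)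

theory Defs
  imports "HOL-Analysis.Analysis"
begin

text \<open>Finitely additive probability on the sigma-algebra sets M (values off sets M irrelevant).\<close>
definition fa_prob :: "'a measure \<Rightarrow> ('a set \<Rightarrow> real) \<Rightarrow> bool" where
  "fa_prob M P \<longleftrightarrow>
     (\<forall>A\<in>sets M. 0 \<le> P A) \<and> P (space M) = 1 \<and>
     (\<forall>A\<in>sets M. \<forall>B\<in>sets M. A \<inter> B = {} \<longrightarrow> P (A \<union> B) = P A + P B)"

definition upper_prob :: "('a set \<Rightarrow> real) set \<Rightarrow> 'a set \<Rightarrow> real" where
  "upper_prob \<P> A = (SUP P\<in>\<P>. P A)"

definition preserves :: "'a measure \<Rightarrow> ('a set \<Rightarrow> real) \<Rightarrow> ('a \<Rightarrow> 'a) \<Rightarrow> bool" where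
  "preserves M V \<theta> \<longleftrightarrow> (\<forall>A\<in>sets M. V (\<theta> -` A \<inter> space M) = V A)"

definition cont_from_below :: "'a measure \<Rightarrow> ('a set \<Rightarrow> real) \<Rightarrow> bool" where
  "cont_from_below M V \<longleftrightarrow>
     (\<forall>A :: nat \<Rightarrow> 'a set. range A \<subseteq> sets M \<longrightarrow> incseq A \<longrightarrow>
        (\<lambda>n. V (A n)) \<longlonglongrightarrow> V (\<Union>n. A n))"

definition cont_from_above :: "'a measure \<Rightarrow> ('a set \<Rightarrow> real) \<Rightarrow> bool" where
  "cont_from_above M V \<longleftrightarrow>
     (\<forall>A :: nat \<Rightarrow> 'a set. range A \<subseteq> sets M \<longrightarrow> decseq A \<longrightarrow>
        (\<lambda>n. V (A n)) \<longlonglongrightarrow> V (\<Inter>n. A n))"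

definition continuous_cap :: "'a measure \<Rightarrow> ('a set \<Rightarrow> real) \<Rightarrow> bool" where
  "continuous_cap M V \<longleftrightarrow> cont_from_below M V \<and> cont_from_above M V"

definition quasi_surely :: "'a measure \<Rightarrow> ('a set \<Rightarrow> real) \<Rightarrow> ('a \<Rightarrow> bool) \<Rightarrow> bool" where
  "quasi_surely M V Q \<longleftrightarrow> (\<exists>A\<in>sets M. V A = 0 \<and> (\<forall>\<omega>\<in>space M - A. Q \<omega>))"

definition const_qs :: "'a measure \<Rightarrow> ('a set \<Rightarrow> real) \<Rightarrow> ('a \<Rightarrow> real) \<Rightarrow> bool" where
  "const_qs M V \<xi> \<longleftrightarrow> (\<exists>c::real. V {\<omega>\<in>space M. \<xi> \<omega> \<noteq> c} = 0)"

definition ergodic_cap :: "'a measure \<Rightarrow> ('a set \<Rightarrow> real) \<Rightarrow> ('a \<Rightarrow> 'a) \<Rightarrow> bool" where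
  "ergodic_cap M V \<theta> \<longleftrightarrow>
     (\<forall>B\<in>sets M. \<theta> -` B \<inter> space M = B \<longrightarrow>
        (V B = 0 \<or> V B = 1) \<and> (V B = 0 \<or> V (space M - B) = 0))"

end

theory Submission
  imports Defs
begin

text \<open>
  (ii) \<open>\<Longrightarrow>\<close> (i): apply (ii) to the indicator of an invariant set; for an upper probability,
  \<open>V (space M - B) = 0\<close> already forces \<open>V B = 1\<close>.
  (i) \<open>\<Longrightarrow>\<close> (iii): continuity from below makes the \<open>V\<close>-null sets a \<open>\<sigma>\<close>-ideal. If
  \<open>\<xi> \<circ> \<theta> = \<xi>\<close> off a null set \<open>N\<close>, then off the null set \<open>\<Union>n. \<theta>\<^sup>-\<^sup>n N\<close> (null because
  \<open>\<theta>\<close> preserves \<open>V\<close>) the event \<open>\<xi> \<le> t\<close> coincides with the exactly invariant event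
  "\<open>\<xi> \<circ> \<theta>\<^sup>n \<le> t\<close> eventually", so by ergodicity \<open>{\<xi> \<le> t}\<close> or \<open>{\<xi> > t}\<close> is null for each
  \<open>t\<close>; this forces \<open>\<xi>\<close> to be quasi-surely equal to the infimum of the \<open>t\<close> with
  \<open>{\<xi> > t}\<close> null. (iii) \<open>\<Longrightarrow>\<close> (ii) is trivial, so (ii) \<open>\<Longrightarrow>\<close> (iii) and hence all equivalences
  need only continuity from below.
\<close>

lemma fa_prob_nonneg: "fa_prob M P \<Longrightarrow> A \<in> sets M \<Longrightarrow> 0 \<le> P A"
  unfolding fa_prob_def by blast

lemma fa_prob_space: "fa_prob M P \<Longrightarrow> P (space M) = 1"
  unfolding fa_prob_def by blast

lemma fa_prob_additive:
  "fa_prob M P \<Longrightarrow> A \<in> sets M \<Longrightarrow> B \<in> sets M \<Longrightarrow> A \<inter> B = {} \<Longrightarrow> P (A \<union> B) = P A + P B"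
  unfolding fa_prob_def by blast

lemma fa_prob_empty: "fa_prob M P \<Longrightarrow> P {} = 0"
  using fa_prob_additive[of M P "{}" "{}"] by simp

lemma fa_prob_Diff:
  assumes "fa_prob M P" "A \<in> sets M" "B \<in> sets M" "A \<subseteq> B"
  shows "P (B - A) = P B - P A"
proof -
  have "B = A \<union> (B - A)" using assms(4) by blast
  then show ?thesis using fa_prob_additive[OF assms(1,2), of "B - A"] assms(2,3) by auto
qed

lemma fa_prob_mono:
  assumes "fa_prob M P" "A \<in> sets M" "B \<in> sets M" "A \<subseteq> B"
  shows "P A \<le> P B"
  using fa_prob_Diff[OF assms] fa_prob_nonneg[OF assms(1) sets.Diff[OF assms(3,2)]] by simp

lemma fa_prob_le_1:
  assumes "fa_prob M P" "A \<in> sets M"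
  shows "P A \<le> 1"
  using fa_prob_mono[OF assms sets.top sets.sets_into_space[OF assms(2)]] fa_prob_space[OF assms(1)]
  by simp

lemma fa_prob_compl:
  assumes "fa_prob M P" "A \<in> sets M"
  shows "P (space M - A) = 1 - P A"
  using fa_prob_Diff[OF assms sets.top sets.sets_into_space[OF assms(2)]] fa_prob_space[OF assms(1)]
  by simp

lemma fa_prob_subadditive:
  assumes "fa_prob M P" "A \<in> sets M" "B \<in> sets M"
  shows "P (A \<union> B) \<le> P A + P B"
proof -
  have "A \<union> B = A \<union> (B - A)" by blast
  then have "P (A \<union> B) = P A + P (B - A)" using fa_prob_additive[OF assms(1,2), of "B - A"] assms by auto
  then show ?thesis using fa_prob_mono[OF assms(1) _ assms(3), of "B - A"] assms(2,3) by auto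
qed

lemma greaterThan_eq_UN_inverse: "{a<..} = (\<Union>n. {a + inverse (Suc n)<..})" for a :: real
proof (intro set_eqI iffI)
  fix x assume "x \<in> {a<..}"
  then obtain n where "inverse (Suc n) < x - a" using reals_Archimedean[of "x - a"] by auto
  then show "x \<in> (\<Union>n. {a + inverse (Suc n)<..})" by (intro UN_I[of n]) auto
next
  fix x assume "x \<in> (\<Union>n. {a + inverse (Suc n)<..})"
  then obtain n where "a + inverse (Suc n) < x" by auto
  moreover have "0 < inverse (real (Suc n))" by simp
  ultimately show "x \<in> {a<..}" unfolding greaterThan_iff by linarith
qed

lemma lessThan_eq_UN_inverse: "{..<a} = (\<Union>n. {..a - inverse (Suc n)})" for a :: real
proof (intro set_eqI iffI)
  fix x assume "x \<in> {..<a}"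
  then obtain n where "inverse (Suc n) < a - x" using reals_Archimedean[of "a - x"] by auto
  then show "x \<in> (\<Union>n. {..a - inverse (Suc n)})" by (intro UN_I[of n]) auto
next
  fix x assume "x \<in> (\<Union>n. {..a - inverse (Suc n)})"
  then obtain n where "x \<le> a - inverse (Suc n)" by auto
  moreover have "0 < inverse (real (Suc n))" by simp
  ultimately show "x \<in> {..<a}" unfolding lessThan_iff by linarith
qed

lemma ex_null_compl_singleton:
  fixes null :: "real set \<Rightarrow> bool"
  assumes null_subset: "\<And>X Y. X \<subseteq> Y \<Longrightarrow> X \<in> sets borel \<Longrightarrow> Y \<in> sets borel \<Longrightarrow> null Y \<Longrightarrow> null X"
    and null_UN: "\<And>X :: nat \<Rightarrow> real set. (\<And>n. X n \<in> sets borel) \<Longrightarrow> (\<And>n. null (X n)) \<Longrightarrow> null (\<Union>n. X n)"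
    and UNIV_not_null: "\<not> null UNIV"
    and null_halfline: "\<And>t. null {..t} \<or> null {t<..}"
  shows "\<exists>c. null (- {c})"
proof -
  define S where "S = {t. null {t<..}}"
  have S_upward: "t \<in> S" if "s \<in> S" "s \<le> t" for s t
    using that null_subset[of "{t<..}" "{s<..}"] unfolding S_def by auto
  have S_nonempty: "S \<noteq> {}"
  proof
    assume "S = {}"
    then have "null (\<Union>n. {..real n})" using null_halfline unfolding S_def by (intro null_UN) auto
    moreover have "(\<Union>n. {..real n}) = UNIV" by (auto intro: real_arch_simple)
    ultimately show False using UNIV_not_null by simp
  qed
  have S_bdd: "bdd_below S"
  proof (rule ccontr)
    assume "\<not> bdd_below S"
    then have "- real n \<in> S" for n using S_upward unfolding bdd_below_def by (meson less_imp_le not_le)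
    then have "null (\<Union>n. {- real n<..})" unfolding S_def by (intro null_UN) auto
    moreover have "(\<Union>n. {- real n<..}) = UNIV" by (auto simp: minus_less_iff intro: reals_Archimedean2)
    ultimately show False using UNIV_not_null by simp
  qed
  define c where "c = Inf S"
  have "c + inverse (Suc n) \<in> S" for n
    using cInf_lessD[OF S_nonempty, of "c + inverse (Suc n)"] S_upward unfolding c_def
    by (auto intro: less_imp_le)
  then have "null (\<Union>n. {c + inverse (Suc n)<..})" unfolding S_def by (intro null_UN) auto
  then have above: "null {c<..}" by (simp only: greaterThan_eq_UN_inverse[of c, symmetric])
  have "c - inverse (Suc n) \<notin> S" for n
    using cInf_lower[OF _ S_bdd, of "c - inverse (Suc n)"] unfolding c_def by auto
  then have "null (\<Union>n. {..c - inverse (Suc n)})" using null_halfline unfolding S_def by (intro null_UN) auto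
  then have below: "null {..<c}" by (simp only: lessThan_eq_UN_inverse[of c, symmetric])
  have "(\<Union>n::nat. if n = 0 then {..<c} else {c<..}) = - {c}" by (auto split: if_splits)
  moreover have "null (\<Union>n::nat. if n = 0 then {..<c} else {c<..})"
    using above below by (intro null_UN) auto
  ultimately show ?thesis by auto
qed

lemma eventually_along_orbit_invariant:
  assumes "\<theta> \<in> measurable M M"
  shows "\<theta> -` {\<omega>\<in>space M. eventually (\<lambda>n. P ((\<theta> ^^ n) \<omega>)) sequentially} \<inter> space M
    = {\<omega>\<in>space M. eventually (\<lambda>n. P ((\<theta> ^^ n) \<omega>)) sequentially}"
proof -
  have "eventually (\<lambda>n. P ((\<theta> ^^ n) (\<theta> \<omega>))) sequentially \<longleftrightarrow> eventually (\<lambda>n. P ((\<theta> ^^ n) \<omega>)) sequentially"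
    for \<omega>
    using eventually_sequentially_Suc[of "\<lambda>n. P ((\<theta> ^^ n) \<omega>)"] by (simp add: funpow_swap1)
  then show ?thesis using measurable_space[OF assms] by auto
qed

locale upper_probability =
  fixes M :: "'a measure" and \<P> :: "('a set \<Rightarrow> real) set"
  assumes nonempty: "\<P> \<noteq> {}" and fa_prob: "P \<in> \<P> \<Longrightarrow> fa_prob M P"
begin

abbreviation V where "V \<equiv> upper_prob \<P>"

lemma upper_prob_upper: "P \<in> \<P> \<Longrightarrow> A \<in> sets M \<Longrightarrow> P A \<le> V A"
  unfolding upper_prob_def using fa_prob fa_prob_le_1
  by (intro cSUP_upper bdd_aboveI[where M=1]) auto

lemma upper_prob_least: "(\<And>P. P \<in> \<P> \<Longrightarrow> P A \<le> c) \<Longrightarrow> V A \<le> c"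
  unfolding upper_prob_def using nonempty by (rule cSUP_least)

lemma upper_prob_const:
  assumes "\<And>P. P \<in> \<P> \<Longrightarrow> P A = c"
  shows "V A = c"
proof -
  have "(SUP P\<in>\<P>. P A) = (SUP P\<in>\<P>. c)" using assms by (rule SUP_cong[OF refl])
  then show ?thesis unfolding upper_prob_def using nonempty by simp
qed

lemma upper_prob_space: "V (space M) = 1"
  using fa_prob fa_prob_space by (intro upper_prob_const) blast

lemma upper_prob_empty: "V {} = 0"
  using fa_prob fa_prob_empty by (intro upper_prob_const) blast

lemma upper_prob_nonneg:
  assumes "A \<in> sets M"
  shows "0 \<le> V A"
proof -
  obtain P where "P \<in> \<P>" using nonempty by blast
  then show ?thesis using upper_prob_upper fa_prob_nonneg[OF fa_prob] assms by (meson order_trans)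
qed

lemma upper_prob_mono:
  assumes "A \<in> sets M" "B \<in> sets M" "A \<subseteq> B"
  shows "V A \<le> V B"
proof (rule upper_prob_least)
  fix P assume P: "P \<in> \<P>"
  then have "P A \<le> P B" using fa_prob_mono[OF fa_prob assms] by blast
  also have "\<dots> \<le> V B" using upper_prob_upper[OF P assms(2)] .
  finally show "P A \<le> V B" .
qed

lemma upper_prob_subadditive:
  assumes "A \<in> sets M" "B \<in> sets M"
  shows "V (A \<union> B) \<le> V A + V B"
proof (rule upper_prob_least)
  fix P assume P: "P \<in> \<P>"
  then have "P (A \<union> B) \<le> P A + P B" using fa_prob_subadditive[OF fa_prob assms] by blast
  also have "\<dots> \<le> V A + V B" using upper_prob_upper[OF P] assms by (intro add_mono) auto
  finally show "P (A \<union> B) \<le> V A + V B" .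
qed

lemma upper_prob_eq_1_if_compl_null:
  assumes "A \<in> sets M" "V (space M - A) = 0"
  shows "V A = 1"
proof -
  obtain P where P: "P \<in> \<P>" using nonempty by blast
  have "1 - P A = P (space M - A)" using fa_prob_compl[OF fa_prob[OF P] assms(1)] by simp
  also have "\<dots> \<le> 0" using upper_prob_upper[OF P, of "space M - A"] assms by auto
  finally have "1 \<le> V A" using upper_prob_upper[OF P assms(1)] by simp
  moreover have "V A \<le> 1" using fa_prob fa_prob_le_1 assms(1) by (intro upper_prob_least) blast
  ultimately show ?thesis by simp
qed

lemma upper_prob_null_subset: "A \<in> sets M \<Longrightarrow> B \<in> sets M \<Longrightarrow> A \<subseteq> B \<Longrightarrow> V B = 0 \<Longrightarrow> V A = 0"
  using upper_prob_mono[of A B] upper_prob_nonneg[of A] by simp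

lemma upper_prob_null_Un: "A \<in> sets M \<Longrightarrow> B \<in> sets M \<Longrightarrow> V A = 0 \<Longrightarrow> V B = 0 \<Longrightarrow> V (A \<union> B) = 0"
  using upper_prob_subadditive[of A B] upper_prob_nonneg[of "A \<union> B"] by simp

lemma upper_prob_null_UN:
  fixes A :: "nat \<Rightarrow> 'a set"
  assumes "cont_from_below M V" and A: "range A \<subseteq> sets M" and null: "\<And>n. V (A n) = 0"
  shows "V (\<Union>n. A n) = 0"
proof -
  define B where "B n = (\<Union>i<n. A i)" for n
  have B: "range B \<subseteq> sets M" using A unfolding B_def by auto
  have null_B: "V (B n) = 0" for n
  proof (induction n)
    case (Suc n)
    have "B (Suc n) = B n \<union> A n" unfolding B_def by (auto simp: lessThan_Suc)
    then show ?case using upper_prob_null_Un[of "B n" "A n"] Suc B A null by auto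
  qed (simp add: B_def upper_prob_empty)
  have "incseq B" unfolding B_def incseq_def by (intro allI impI UN_mono) auto
  then have "(\<lambda>n. V (B n)) \<longlonglongrightarrow> V (\<Union>n. B n)"
    using assms(1) B unfolding cont_from_below_def by blast
  then have "V (\<Union>n. B n) = 0" by (simp add: null_B LIMSEQ_const_iff)
  moreover have "(\<Union>n. B n) = (\<Union>n. A n)" unfolding B_def by blast
  ultimately show ?thesis by simp
qed

lemma const_qs_if_threshold_dichotomy:
  assumes cb: "cont_from_below M V" and \<xi>: "\<xi> \<in> borel_measurable M"
    and dichotomy: "\<And>t. V {\<omega>\<in>space M. \<xi> \<omega> \<le> t} = 0 \<or> V {\<omega>\<in>space M. t < \<xi> \<omega>} = 0"
  shows "const_qs M V \<xi>"
proof -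
  have sets: "\<xi> -` X \<inter> space M \<in> sets M" if "X \<in> sets borel" for X
    using measurable_sets[OF \<xi> that] .
  have "\<exists>c. V (\<xi> -` (- {c}) \<inter> space M) = 0"
  proof (rule ex_null_compl_singleton[where null = "\<lambda>X. V (\<xi> -` X \<inter> space M) = 0"])
    show "V (\<xi> -` X \<inter> space M) = 0"
      if "X \<subseteq> Y" "X \<in> sets borel" "Y \<in> sets borel" "V (\<xi> -` Y \<inter> space M) = 0" for X Y
      using upper_prob_null_subset[of "\<xi> -` X \<inter> space M" "\<xi> -` Y \<inter> space M"] that sets by blast
    show "V (\<xi> -` (\<Union>n. X n) \<inter> space M) = 0"
      if "\<And>n. X n \<in> sets borel" "\<And>n. V (\<xi> -` X n \<inter> space M) = 0" for X :: "nat \<Rightarrow> real set"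
    proof -
      have "\<xi> -` (\<Union>n. X n) \<inter> space M = (\<Union>n. \<xi> -` X n \<inter> space M)" by blast
      also have "V \<dots> = 0" using that sets by (intro upper_prob_null_UN[OF cb]) auto
      finally show ?thesis .
    qed
    show "V (\<xi> -` UNIV \<inter> space M) \<noteq> 0" by (simp add: upper_prob_space)
    have "\<xi> -` {..t} \<inter> space M = {\<omega>\<in>space M. \<xi> \<omega> \<le> t}" "\<xi> -` {t<..} \<inter> space M = {\<omega>\<in>space M. t < \<xi> \<omega>}"
      for t by auto
    then show "V (\<xi> -` {..t} \<inter> space M) = 0 \<or> V (\<xi> -` {t<..} \<inter> space M) = 0" for t
      using dichotomy by simp
  qed
  moreover have "\<xi> -` (- {c}) \<inter> space M = {\<omega>\<in>space M. \<xi> \<omega> \<noteq> c}" for c by auto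
  ultimately show ?thesis unfolding const_qs_def by auto
qed

lemma quasi_surely_if_everywhere: "\<forall>\<omega>\<in>space M. Q \<omega> \<Longrightarrow> quasi_surely M V Q"
  unfolding quasi_surely_def using upper_prob_empty by blast

lemma null_or_conull_if_const_qs_indicator:
  assumes B: "B \<in> sets M" and "const_qs M V (indicator B)"
  shows "V B = 0 \<or> V (space M - B) = 0"
proof -
  obtain c :: real where c: "V {\<omega>\<in>space M. indicator B \<omega> \<noteq> c} = 0"
    using assms(2) unfolding const_qs_def by blast
  have "B \<subseteq> space M" using sets.sets_into_space[OF B] .
  then consider "c = 0" "{\<omega>\<in>space M. indicator B \<omega> \<noteq> c} = B"
    | "c = 1" "{\<omega>\<in>space M. indicator B \<omega> \<noteq> c} = space M - B"
    | "{\<omega>\<in>space M. indicator B \<omega> \<noteq> c} = space M"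
    by (cases "c = 0 \<or> c = 1") (auto simp: indicator_def)
  then show ?thesis using c upper_prob_space by cases auto
qed

lemma ergodic_capI:
  assumes "\<And>B. B \<in> sets M \<Longrightarrow> \<theta> -` B \<inter> space M = B \<Longrightarrow> V B = 0 \<or> V (space M - B) = 0"
  shows "ergodic_cap M V \<theta>"
  unfolding ergodic_cap_def using assms upper_prob_eq_1_if_compl_null by blast

lemma ergodic_if_invariant_bounded_const_qs:
  assumes "\<And>\<xi>. \<xi> \<in> borel_measurable M \<Longrightarrow> (\<exists>K. \<forall>\<omega>\<in>space M. \<bar>\<xi> \<omega>\<bar> \<le> K) \<Longrightarrow>
      (\<forall>\<omega>\<in>space M. \<xi> (\<theta> \<omega>) = \<xi> \<omega>) \<Longrightarrow> const_qs M V \<xi>"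
  shows "ergodic_cap M V \<theta>"
proof (rule ergodic_capI)
  fix B assume B: "B \<in> sets M" "\<theta> -` B \<inter> space M = B"
  have "indicator B \<in> borel_measurable M" using B(1) by simp
  moreover have "\<forall>\<omega>\<in>space M. \<bar>indicator B \<omega> :: real\<bar> \<le> 1" by (simp add: indicator_def)
  moreover have "\<forall>\<omega>\<in>space M. indicator B (\<theta> \<omega>) = (indicator B \<omega> :: real)"
    using B(2) by (auto simp: indicator_def)
  ultimately have "const_qs M V (indicator B)" using assms by blast
  then show "V B = 0 \<or> V (space M - B) = 0" using null_or_conull_if_const_qs_indicator B(1) by blast
qed

lemma null_or_conull_if_near_invariant:
  assumes "ergodic_cap M V \<theta>" and B: "B \<in> sets M" "\<theta> -` B \<inter> space M = B"
    and A: "A \<in> sets M" and N: "N \<in> sets M" "V N = 0" and "A - B \<subseteq> N" "B - A \<subseteq> N"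
  shows "V A = 0 \<or> V (space M - A) = 0"
proof -
  have "V B = 0 \<or> V (space M - B) = 0" using assms(1) B unfolding ergodic_cap_def by blast
  moreover have "A \<subseteq> B \<union> N" "space M - A \<subseteq> (space M - B) \<union> N" using assms(7,8) by blast+
  ultimately show ?thesis
    using upper_prob_null_Un upper_prob_null_subset A B N by (meson sets.Un sets.compl_sets)
qed

lemma upper_prob_null_UN_funpow_preimage:
  assumes "cont_from_below M V" "preserves M V \<theta>" "\<theta> \<in> measurable M M"
    and N: "N \<in> sets M" "V N = 0"
  shows "V (\<Union>n. (\<theta> ^^ n) -` N \<inter> space M) = 0"
proof (rule upper_prob_null_UN[OF assms(1)])
  have sets: "(\<theta> ^^ n) -` N \<inter> space M \<in> sets M" for n
    using measurable_sets[OF measurable_compose_n[OF assms(3)] N(1)] .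
  then show "range (\<lambda>n. (\<theta> ^^ n) -` N \<inter> space M) \<subseteq> sets M" by blast
  show "V ((\<theta> ^^ n) -` N \<inter> space M) = 0" for n
  proof (induction n)
    case 0
    then show ?case using N sets.sets_into_space by (simp add: Int_absorb2)
  next
    case (Suc n)
    have "(\<theta> ^^ Suc n) -` N \<inter> space M = \<theta> -` ((\<theta> ^^ n) -` N \<inter> space M) \<inter> space M"
      using measurable_space[OF assms(3)] by (auto simp del: funpow.simps simp: funpow_Suc_right)
    then show ?case using assms(2) sets Suc unfolding preserves_def by metis
  qed
qed

lemma const_qs_if_ergodic:
  assumes cb: "cont_from_below M V" and pres: "preserves M V \<theta>"
    and \<theta>[measurable]: "\<theta> \<in> measurable M M" and erg: "ergodic_cap M V \<theta>"
    and \<xi>[measurable]: "\<xi> \<in> borel_measurable M" and "quasi_surely M V (\<lambda>\<omega>. \<xi> (\<theta> \<omega>) = \<xi> \<omega>)"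
  shows "const_qs M V \<xi>"
proof -
  obtain N where N: "N \<in> sets M" "V N = 0" and inv: "\<And>\<omega>. \<omega> \<in> space M - N \<Longrightarrow> \<xi> (\<theta> \<omega>) = \<xi> \<omega>"
    using assms(6) unfolding quasi_surely_def by blast
  define N' where "N' = (\<Union>n. (\<theta> ^^ n) -` N \<inter> space M)"
  have N': "N' \<in> sets M" "V N' = 0"
    unfolding N'_def using upper_prob_null_UN_funpow_preimage[OF cb pres \<theta> N] N(1) by auto
  have orbit: "\<xi> ((\<theta> ^^ n) \<omega>) = \<xi> \<omega>" if "\<omega> \<in> space M - N'" for \<omega> n
  proof (induction n)
    case (Suc n)
    have "(\<theta> ^^ n) \<omega> \<in> space M - N" using that measurable_space[OF measurable_compose_n[OF \<theta>]]
      unfolding N'_def by blast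
    then show ?case using inv Suc by simp
  qed simp
  show ?thesis
  proof (rule const_qs_if_threshold_dichotomy[OF cb \<xi>])
    fix t
    define B where "B = {\<omega>\<in>space M. eventually (\<lambda>n. \<xi> ((\<theta> ^^ n) \<omega>) \<le> t) sequentially}"
    define L where "L = {\<omega>\<in>space M. \<xi> \<omega> \<le> t}"
    have "B \<in> sets M" "L \<in> sets M" unfolding B_def L_def by measurable
    moreover have "\<theta> -` B \<inter> space M = B"
      unfolding B_def using \<theta> by (rule eventually_along_orbit_invariant)
    moreover have "L - B \<subseteq> N'" "B - L \<subseteq> N'" unfolding B_def L_def using orbit by auto
    ultimately have "V L = 0 \<or> V (space M - L) = 0"
      using null_or_conull_if_near_invariant[OF erg _ _ _ N'] by blast
    moreover have "space M - L = {\<omega>\<in>space M. t < \<xi> \<omega>}" unfolding L_def by auto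
    ultimately show "V {\<omega>\<in>space M. \<xi> \<omega> \<le> t} = 0 \<or> V {\<omega>\<in>space M. t < \<xi> \<omega>} = 0"
      unfolding L_def by simp
  qed
qed

end

theorem theorem5:
  fixes M :: "'a measure" and \<P> :: "('a set \<Rightarrow> real) set" and \<theta> :: "'a \<Rightarrow> 'a"
  defines "V \<equiv> upper_prob \<P>"
  defines "I \<equiv> ergodic_cap M V \<theta>"
  defines "II \<equiv> (\<forall>\<xi> \<in> borel_measurable M. (\<exists>K. \<forall>\<omega>\<in>space M. \<bar>\<xi> \<omega>\<bar> \<le> K) \<longrightarrow>
                   (\<forall>\<omega>\<in>space M. \<xi> (\<theta> \<omega>) = \<xi> \<omega>) \<longrightarrow> const_qs M V \<xi>)"
  defines "III \<equiv> (\<forall>\<xi> \<in> borel_measurable M.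
                   quasi_surely M V (\<lambda>\<omega>. \<xi> (\<theta> \<omega>) = \<xi> \<omega>) \<longrightarrow> const_qs M V \<xi>)"
  assumes "\<P> \<noteq> {}"
    and "\<forall>P\<in>\<P>. fa_prob M P"
    and "\<theta> \<in> measurable M M"
    and "preserves M V \<theta>"
  shows "(III \<longrightarrow> II) \<and> (II \<longrightarrow> I)
         \<and> (cont_from_below M V \<longrightarrow> (II \<longleftrightarrow> I))
         \<and> (continuous_cap M V \<longrightarrow> (I \<longleftrightarrow> II) \<and> (II \<longleftrightarrow> III))"
proof -
  interpret upper_probability M \<P> using assms(5,6) by unfold_locales auto
  have III_II: "III \<longrightarrow> II"
    unfolding II_def III_def V_def by (blast intro: quasi_surely_if_everywhere)
  have II_I: "II \<longrightarrow> I"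
    unfolding II_def I_def V_def by (intro impI ergodic_if_invariant_bounded_const_qs) blast
  have I_III: "cont_from_below M V \<longrightarrow> I \<longrightarrow> III"
    unfolding I_def III_def V_def using const_qs_if_ergodic assms(7,8)[unfolded V_def] by blast
  show ?thesis using III_II II_I I_III unfolding continuous_cap_def by blast
qed

end
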